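(* Let $n\in\mathbb N$ and let $S$ be a well ordered subsemigroup of the nonnegative part of $\mathbb R^n$ with the lexicographic order. Suppose that $S$ has ordinal type $\le\omega^h$ for some $h\in\mathbb N$. Then $S$ has ordinal type $\le\omega^n$.
   Context: $\omega$ denotes the ordinal type of $\mathbb N$. The lexicographic order on $\mathbb R^n$ compares first coordinates first. *)

theory Defs
  imports Complex_Main
begin

text \<open>Vectors of R^n are represented as real lists of length n.\<close>

definition lex_less :: "real list \<Rightarrow> real list \<Rightarrow> bool" where
  "lex_less x y \<longleftrightarrow> (x, y) \<in> lexord {(a, b). a < b}"

definition lex_le :: "real list \<Rightarrow> real list \<Rightarrow> bool" where
  "lex_le x y \<longleftrightarrow> x = y \<or> lex_less x y"

definition vec_add :: "real list \<Rightarrow> real list \<Rightarrow> real list" where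
  "vec_add x y = map2 (+) x y"

definition lex_rel :: "real list set \<Rightarrow> real list rel" where
  "lex_rel S = {(x, y). x \<in> S \<and> y \<in> S \<and> lex_le x y}"

text \<open>A canonical well order of ordinal type omega^h: N^h ordered
  lexicographically (first coordinate most significant).\<close>
definition omega_pow :: "nat \<Rightarrow> nat list rel" where
  "omega_pow h = {(xs, ys). length xs = h \<and> length ys = h \<and>
      (xs = ys \<or> (xs, ys) \<in> lexord {(a, b). a < b})}"

end

theory Submission
  imports Defs
begin

(* For x in S and a coordinate j < n let  below_set S x j  be the set of
   values y!j < x!j taken by elements y of S that agree with x on the first j
   coordinates.  The map  x \<mapsto> (card (below_set S x j))_{j<n}  is strictly monotone from
   (S, lex) into N^n with the lexicographic order, i.e. into omega^n; since a strictly
   monotone map between well orders witnesses  \<le>o, the theorem follows once every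
   below_set is finite.
   Finiteness: an infinite below_set yields elements y_k of S agreeing on the first j
   coordinates whose j-th coordinates form a monotone injective sequence below x!j.
   A decreasing sequence contradicts well-foundedness.  For an increasing one we pass
   to a subsequence whose distances d_k to the supremum decrease so fast that the
   sums  y_{p_1} + ... + y_{p_m}  (p_1 < ... < p_m) are ordered lexicographically in
   (p_1,...,p_m); this embeds omega^(h+1) into S, contradicting  S \<le>o omega^h  because
   omega^(h+1) does not embed into omega^h. *)


section \<open>Strictly monotone maps between well orders\<close>

definition strict_hom :: "'a rel \<Rightarrow> 'b rel \<Rightarrow> ('a \<Rightarrow> 'b) \<Rightarrow> bool" where
  "strict_hom r r' f \<longleftrightarrow> (\<forall>a b. (a, b) \<in> r - Id \<longrightarrow> (f a, f b) \<in> r' - Id)"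

lemma strict_hom_not_below:
  assumes wf: "wf (r - Id)" and g: "strict_hom r r g"
  shows "(g a, a) \<notin> r - Id"
  using wf
proof (induction a rule: wf_induct_rule)
  case (less a)
  show ?case
  proof
    assume below: "(g a, a) \<in> r - Id"
    then have "(g (g a), g a) \<notin> r - Id" using less by blast
    moreover have "(g (g a), g a) \<in> r - Id" using g below unfolding strict_hom_def by blast
    ultimately show False by blast
  qed
qed

text \<open>A strictly monotone map from one well order into another witnesses \<open>\<le>o\<close>:
  otherwise r' embeds onto a proper initial segment of r, and composing gives a
  strictly monotone self-map of r moving some element down.\<close>
lemma strict_hom_ordLeq:
  assumes r: "Well_order r" and r': "Well_order r'"
    and into: "\<forall>a\<in>Field r. f a \<in> Field r'" and f: "strict_hom r r' f"
  shows "(r, r') \<in> ordLeq"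
proof (rule ccontr)
  assume "(r, r') \<notin> ordLeq"
  then have "(r', r) \<in> ordLess" using ordLess_or_ordLeq[OF r' r] by blast
  then obtain g where "embedS r' r g" unfolding ordLess_def by blast
  then have e: "embed r' r g" and not_onto: "\<not> bij_betw g (Field r') (Field r)"
    unfolding embedS_def by auto
  have inj: "inj_on g (Field r')" using embed_inj_on[OF r' e] .
  have sub: "g ` Field r' \<subseteq> Field r" using embed_Field[OF e] .
  have segment: "ofilter r (g ` Field r')" using embed_Field_ofilter[OF r' r e] .
  obtain a where aF: "a \<in> Field r" and a_out: "a \<notin> g ` Field r'"
    using not_onto inj sub unfolding bij_betw_def by blast
  have gf: "strict_hom r r (g \<circ> f)"
    unfolding strict_hom_def
  proof (intro allI impI)
    fix x y assume "(x, y) \<in> r - Id"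
    then have fxy: "(f x, f y) \<in> r' - Id" using f unfolding strict_hom_def by blast
    then have "f x \<in> Field r'" "f y \<in> Field r'" unfolding Field_def by auto
    then have "g (f x) \<noteq> g (f y)" using fxy inj unfolding inj_on_def by auto
    moreover have "(g (f x), g (f y)) \<in> r" using embed_compat[OF e] fxy unfolding compat_def by blast
    ultimately show "((g \<circ> f) x, (g \<circ> f) y) \<in> r - Id" by simp
  qed
  have ga_in: "g (f a) \<in> g ` Field r'" using into aF by blast
  have "(g (f a), a) \<in> r"
  proof (rule ccontr)
    assume "(g (f a), a) \<notin> r"
    then have "(a, g (f a)) \<in> r" using r aF sub ga_in a_out
      unfolding well_order_on_def linear_order_on_def total_on_def by (metis subsetD)
    then show False using segment ga_in a_out unfolding ofilter_def under_def by blast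
  qed
  then have "((g \<circ> f) a, a) \<in> r - Id" using a_out ga_in by auto
  moreover have "wf (r - Id)" using r unfolding well_order_on_def by blast
  ultimately show False using strict_hom_not_below[OF _ gf] by blast
qed


section \<open>The well order \<open>\<omega>^h\<close>\<close>

lemma lexord_less_irrefl: "(xs, xs) \<notin> lexord {(a, b). a < (b::'a::order)}"
  by (rule lexord_irreflexive) auto

lemma lexord_less_trans:
  "(x, y) \<in> lexord {(a, b). a < (b::'a::order)} \<Longrightarrow> (y, z) \<in> lexord {(a, b). a < b}
   \<Longrightarrow> (x, z) \<in> lexord {(a, b). a < b}"
  by (rule lexord_trans) (auto simp: trans_def)

lemma Field_omega_pow: "Field (omega_pow n) = {xs. length xs = n}"
  unfolding omega_pow_def Field_def by auto

lemma omega_pow_strict: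
  "(xs, ys) \<in> omega_pow n - Id \<longleftrightarrow>
     length xs = n \<and> length ys = n \<and> (xs, ys) \<in> lexord {(a, b). a < b}"
  unfolding omega_pow_def using lexord_less_irrefl by auto

text \<open>\<open>\<nat>^n\<close> under the lexicographic order is a well order: its strict part lies inside
  the well-founded relation \<open>lexn\<close>.\<close>
lemma omega_pow_wo: "Well_order (omega_pow n)"
proof -
  have wf: "wf (omega_pow n - Id)"
  proof (rule wf_subset[OF wf_lexn[OF wf_less]])
    show "omega_pow n - Id \<subseteq> lexn {(x, y::nat). x < y} n"
    proof
      fix p assume "p \<in> omega_pow n - Id"
      moreover obtain xs ys where p: "p = (xs, ys)" by (cases p)
      ultimately have l: "length xs = n" "length ys = n" and lo: "(xs, ys) \<in> lexord {(x, y::nat). x < y}"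
        using omega_pow_strict[of xs ys n] by auto
      have "(xs, ys) \<in> lex {(x, y::nat). x < y}" by (simp only: lexord_lex l lo)
      then obtain k where k: "(xs, ys) \<in> lexn {(x, y::nat). x < y} k" unfolding lex_def by blast
      then show "p \<in> lexn {(x, y::nat). x < y} n" using lexn_length[OF k] l p by simp
    qed
  qed
  have "trans (omega_pow n)"
    by (rule transI) (auto simp: omega_pow_def dest: lexord_less_trans)
  moreover have "antisym (omega_pow n)"
    by (rule antisymI) (auto simp: omega_pow_def dest: lexord_less_trans simp: lexord_less_irrefl)
  moreover have "total_on (Field (omega_pow n)) (omega_pow n)"
  proof -
    have "\<forall>a b::nat. (a, b) \<in> {(x, y). x < y} \<or> a = b \<or> (b, a) \<in> {(x, y). x < y}" by auto
    from lexord_linear[OF this] show ?thesis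
      unfolding total_on_def Field_omega_pow by (auto simp: omega_pow_def)
  qed
  moreover have "refl_on (Field (omega_pow n)) (omega_pow n)"
    unfolding refl_on_def Field_omega_pow by (auto simp: omega_pow_def)
  moreover have "omega_pow n \<subseteq> Field (omega_pow n) \<times> Field (omega_pow n)"
    by (auto intro: FieldI1 FieldI2)
  ultimately show ?thesis using wf
    unfolding well_order_on_def linear_order_on_def partial_order_on_def preorder_on_def
    by blast
qed

text \<open>\<open>\<omega>^(h+1) \<not>\<le> \<omega>^h\<close>: an embedding f would make \<open>js \<mapsto> 0 # f js\<close> a strictly
  monotone self-map of \<open>\<omega>^(h+1)\<close> sending \<open>[1, 0, ..., 0]\<close> below itself.\<close>
lemma omega_pow_Suc_not_ordLeq: "(omega_pow (Suc h), omega_pow h) \<notin> ordLeq"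
proof
  assume "(omega_pow (Suc h), omega_pow h) \<in> ordLeq"
  then obtain f where e: "embed (omega_pow (Suc h)) (omega_pow h) f" unfolding ordLeq_def by blast
  have f_strict: "(f xs, f ys) \<in> omega_pow h - Id" if "(xs, ys) \<in> omega_pow (Suc h) - Id" for xs ys
  proof -
    have "xs \<in> Field (omega_pow (Suc h))" "ys \<in> Field (omega_pow (Suc h))" "xs \<noteq> ys"
      using that unfolding Field_def by auto
    then have "f xs \<noteq> f ys" using embed_inj_on[OF omega_pow_wo e] unfolding inj_on_def by blast
    moreover have "(f xs, f ys) \<in> omega_pow h" using that embed_compat[OF e] unfolding compat_def by blast
    ultimately show ?thesis by blast
  qed
  define g where "g xs = 0 # f xs" for xs
  have g: "strict_hom (omega_pow (Suc h)) (omega_pow (Suc h)) g"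
    unfolding strict_hom_def g_def omega_pow_strict
    using f_strict[unfolded omega_pow_strict] by auto
  define a where "a = (1::nat) # replicate h 0"
  have "a \<in> Field (omega_pow (Suc h))" unfolding a_def Field_omega_pow by simp
  then have "f a \<in> Field (omega_pow h)" by (rule embed_in_Field[OF e])
  then have "(g a, a) \<in> omega_pow (Suc h) - Id"
    unfolding g_def a_def omega_pow_strict Field_omega_pow by simp
  moreover have "wf (omega_pow (Suc h) - Id)" using omega_pow_wo unfolding well_order_on_def by blast
  ultimately show False using strict_hom_not_below[OF _ g] by blast
qed


lemma lexord_take_nthI:
  "i < length x \<Longrightarrow> i < length y \<Longrightarrow> take i x = take i y \<Longrightarrow> (x ! i, y ! i) \<in> r
   \<Longrightarrow> (x, y) \<in> lexord r"
  by (auto simp: lexord_take_index_conv)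

lemma lexord_take_nthD:
  "(x, y) \<in> lexord r \<Longrightarrow> length x = length y
   \<Longrightarrow> \<exists>i<length x. take i x = take i y \<and> (x ! i, y ! i) \<in> r"
  by (auto simp: lexord_take_index_conv)

lemma Field_lex_rel: "Field (lex_rel S) = S"
  unfolding Field_def lex_rel_def lex_le_def by auto

lemma lex_rel_strict: "(x, y) \<in> lex_rel S - Id \<longleftrightarrow> x \<in> S \<and> y \<in> S \<and> lex_less x y"
  unfolding lex_rel_def lex_le_def lex_less_def using lexord_less_irrefl by auto


section \<open>Sums along increasing index sequences\<close>

text \<open>A gap list \<open>[j\<^sub>1, ..., j\<^sub>m]\<close> with offset p encodes the strictly increasing
  positions \<open>p\<^sub>1 = p + j\<^sub>1\<close>, \<open>p\<^sub>(k+1) = p\<^sub>k + 1 + j\<^sub>(k+1)\<close>; gap lists of equal length compare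
  lexicographically exactly as their position lists do.\<close>

fun vsum_at :: "(nat \<Rightarrow> real list) \<Rightarrow> nat \<Rightarrow> nat list \<Rightarrow> real list" where
  "vsum_at z p [] = []"
| "vsum_at z p [j] = z (p + j)"
| "vsum_at z p (j # k # js) = vec_add (z (p + j)) (vsum_at z (Suc (p + j)) (k # js))"

fun rsum_at :: "(nat \<Rightarrow> real) \<Rightarrow> nat \<Rightarrow> nat list \<Rightarrow> real" where
  "rsum_at d p [] = 0"
| "rsum_at d p (j # js) = d (p + j) + rsum_at d (Suc (p + j)) js"

lemma vsum_at_in:
  assumes "\<forall>k. z k \<in> S" and "\<forall>x\<in>S. \<forall>y\<in>S. vec_add x y \<in> S"
  shows "js \<noteq> [] \<Longrightarrow> vsum_at z p js \<in> S"
  using assms by (induction z p js rule: vsum_at.induct) auto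

lemma vsum_at_nth:
  assumes "\<forall>k. length (z k) = n" and "i < n" and "\<forall>k. z k ! i = L - d k"
  shows "js \<noteq> [] \<Longrightarrow>
    length (vsum_at z p js) = n \<and> vsum_at z p js ! i = real (length js) * L - rsum_at d p js"
  using assms
  by (induction z p js rule: vsum_at.induct) (auto simp: vec_add_def algebra_simps)

lemma vsum_at_take:
  assumes "\<forall>k. take i (z k) = c"
  shows "js \<noteq> [] \<Longrightarrow> length js = length js' \<Longrightarrow> take i (vsum_at z p js) = take i (vsum_at z p' js')"
  using assms
proof (induction z p js arbitrary: p' js' rule: vsum_at.induct)
  case (2 z p j)
  then obtain j' where "js' = [j']" by (cases js') auto
  then show ?case using 2 by simp
next
  case (3 z p j k js)
  obtain j' k' js'' where js': "js' = j' # k' # js''"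
    using 3(3) by (cases js'; cases "tl js'") auto
  have "take i (vsum_at z (Suc (p + j)) (k # js)) = take i (vsum_at z (Suc (p' + j')) (k' # js''))"
    using 3(1)[of "k' # js''" "Suc (p' + j')"] 3(3,4) js' by simp
  then show ?case using 3(4) js' by (simp add: vec_add_def take_map take_zip)
qed simp

lemma rsum_at_nonneg: "\<forall>k. d k > 0 \<Longrightarrow> rsum_at d p js \<ge> 0"
  by (induction js arbitrary: p) (auto simp: add_nonneg_nonneg less_imp_le)

lemma rsum_at_le: "\<forall>k\<ge>q. d k \<le> D \<Longrightarrow> q \<le> p \<Longrightarrow> rsum_at d p js \<le> real (length js) * D"
proof (induction js arbitrary: p)
  case (Cons j js)
  have "d (p + j) \<le> D" using Cons.prems by auto
  moreover have "rsum_at d (Suc (p + j)) js \<le> real (length js) * D" using Cons by auto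
  ultimately show ?case by (simp add: algebra_simps)
qed simp

text \<open>If each d-value exceeds 2m times every later one, then for gap lists of length
  at most m a lexicographically larger list has a strictly smaller d-sum: the first
  larger position alone already dominates the remaining sum.\<close>
lemma rsum_at_lex_antimono:
  assumes pos: "\<forall>k. d k > 0" and fast: "\<forall>k k'. k < k' \<longrightarrow> d k' \<le> d k / (2 * real m)"
    and m: "m \<ge> 1"
  shows "length js = length js' \<Longrightarrow> length js \<le> m \<Longrightarrow> (js, js') \<in> lexord {(a, b). a < b}
     \<Longrightarrow> rsum_at d p js' < rsum_at d p js"
proof (induction js arbitrary: js' p)
  case (Cons j js)
  then obtain j' js'' where js': "js' = j' # js''" by (cases js') auto
  have m_pos: "real m \<ge> 1" using m by simp
  show ?case
  proof (cases "j < j'")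
    case True
    have later_small: "\<forall>k\<ge>p + j'. d k \<le> d (p + j')"
    proof (intro allI impI)
      fix k assume "p + j' \<le> k"
      then consider "k = p + j'" | "p + j' < k" by linarith
      then show "d k \<le> d (p + j')"
      proof cases
        case 2
        then have "d k \<le> d (p + j') / (2 * real m)" using fast by blast
        also have "\<dots> \<le> d (p + j')" using pos m_pos by (simp add: divide_le_eq)
        finally show ?thesis .
      qed simp
    qed
    have "rsum_at d p js' \<le> real (length js') * d (p + j')"
      using rsum_at_le[OF later_small, of "Suc (p + j')" js''] unfolding js' by (simp add: algebra_simps)
    also have "\<dots> \<le> real m * d (p + j')"
      using Cons.prems pos by (intro mult_right_mono) (auto simp: less_imp_le)
    also have "\<dots> \<le> real m * (d (p + j) / (2 * real m))"
      using fast True m_pos by (intro mult_left_mono) simp_all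
    also have "\<dots> = d (p + j) / 2" using m_pos by (simp add: field_simps)
    also have "\<dots> < d (p + j)" using pos by simp
    also have "\<dots> \<le> rsum_at d p (j # js)" using rsum_at_nonneg[OF pos] by simp
    finally show ?thesis .
  next
    case False
    then have "j = j'" "(js, js'') \<in> lexord {(a, b). a < b}" using Cons.prems js' by auto
    moreover have "length js = length js''" "length js \<le> m" using Cons.prems js' by auto
    ultimately have "rsum_at d (Suc (p + j)) js'' < rsum_at d (Suc (p + j)) js"
      using Cons.IH by blast
    then show ?thesis using js' \<open>j = j'\<close> by simp
  qed
qed simp


section \<open>Embedding \<open>\<omega>^m\<close> into S\<close>

lemma fast_decreasing_subseq:
  fixes \<delta> :: "nat \<Rightarrow> real"
  assumes pos: "\<forall>k. \<delta> k > 0" and small: "\<forall>e>0. \<exists>k. \<delta> k < e" and c: "c \<ge> 1"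
  shows "\<exists>\<sigma>::nat \<Rightarrow> nat. \<forall>k k'. k < k' \<longrightarrow> \<delta> (\<sigma> k') \<le> \<delta> (\<sigma> k) / c"
proof -
  define nxt where "nxt k = (SOME j. \<delta> j \<le> \<delta> k / c)" for k
  have nxt: "\<delta> (nxt k) \<le> \<delta> k / c" for k
  proof -
    have "\<delta> k / c > 0" using pos c by simp
    then obtain j where "\<delta> j < \<delta> k / c" using small by blast
    then have "\<exists>j. \<delta> j \<le> \<delta> k / c" by (blast intro: less_imp_le)
    then show ?thesis unfolding nxt_def by (rule someI_ex)
  qed
  define e where "e k = \<delta> ((nxt ^^ k) 0)" for k
  have step: "e (Suc k) \<le> e k / c" for k unfolding e_def using nxt by simp
  have shrink: "e k / c \<le> e k" for k
    using pos c unfolding e_def by (simp add: divide_le_eq)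
  have dec: "e (Suc k) \<le> e k" for k using step[of k] shrink[of k] by linarith
  have fast: "e k' \<le> e k / c" if "k < k'" for k k'
  proof -
    have "e k' \<le> e (Suc k)" using lift_Suc_antimono_le[of e, OF dec] that by simp
    then show ?thesis using step[of k] by linarith
  qed
  then have "\<forall>k k'. k < k' \<longrightarrow> \<delta> ((nxt ^^ k') 0) \<le> \<delta> ((nxt ^^ k) 0) / c"
    unfolding e_def by blast
  then show ?thesis by (intro exI[where x = "\<lambda>k. (nxt ^^ k) 0"]) simp
qed

lemma omega_pow_ordLeq_of_fast_family:
  fixes z :: "nat \<Rightarrow> real list" and d :: "nat \<Rightarrow> real"
  assumes semigroup: "\<forall>x\<in>S. \<forall>y\<in>S. vec_add x y \<in> S" and wo: "Well_order (lex_rel S)"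
    and zS: "\<forall>k. z k \<in> S" and zlen: "\<forall>k. length (z k) = n" and i: "i < n"
    and prefix: "\<forall>k. take i (z k) = c" and coord: "\<forall>k. z k ! i = L - d k"
    and pos: "\<forall>k. d k > 0" and fast: "\<forall>k k'. k < k' \<longrightarrow> d k' \<le> d k / (2 * real m)"
    and m: "m \<ge> 1"
  shows "(omega_pow m, lex_rel S) \<in> ordLeq"
proof (rule strict_hom_ordLeq[OF omega_pow_wo wo])
  show "\<forall>js\<in>Field (omega_pow m). vsum_at z 0 js \<in> Field (lex_rel S)"
  proof
    fix js assume "js \<in> Field (omega_pow m)"
    then have "js \<noteq> []" using m unfolding Field_omega_pow by auto
    then show "vsum_at z 0 js \<in> Field (lex_rel S)"
      unfolding Field_lex_rel by (rule vsum_at_in[OF zS semigroup])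
  qed
  show "strict_hom (omega_pow m) (lex_rel S) (vsum_at z 0)"
    unfolding strict_hom_def
  proof (intro allI impI)
    fix js js' assume "(js, js') \<in> omega_pow m - Id"
    then have l: "length js = m" "length js' = m" and lx: "(js, js') \<in> lexord {(a, b). a < b}"
      unfolding omega_pow_strict by blast+
    then have ne: "js \<noteq> []" "js' \<noteq> []" using m by auto
    have "rsum_at d 0 js' < rsum_at d 0 js"
      using rsum_at_lex_antimono[OF pos fast m] l lx by simp
    moreover have "length (vsum_at z 0 js) = n" "vsum_at z 0 js ! i = real m * L - rsum_at d 0 js"
      using vsum_at_nth[OF zlen i coord ne(1)] l(1) by simp_all
    moreover have "length (vsum_at z 0 js') = n" "vsum_at z 0 js' ! i = real m * L - rsum_at d 0 js'"
      using vsum_at_nth[OF zlen i coord ne(2)] l(2) by simp_all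
    moreover have "take i (vsum_at z 0 js) = take i (vsum_at z 0 js')"
      using vsum_at_take[OF prefix ne(1)] l by simp
    ultimately have "lex_less (vsum_at z 0 js) (vsum_at z 0 js')"
      unfolding lex_less_def using i by (intro lexord_take_nthI[of i]) simp_all
    moreover have "vsum_at z 0 js \<in> S" "vsum_at z 0 js' \<in> S"
      using vsum_at_in[OF zS semigroup] ne by simp_all
    ultimately show "(vsum_at z 0 js, vsum_at z 0 js') \<in> lex_rel S - Id"
      unfolding lex_rel_strict by blast
  qed
qed

lemma omega_pow_ordLeq_of_increasing:
  fixes y :: "nat \<Rightarrow> real list"
  assumes semigroup: "\<forall>x\<in>S. \<forall>y\<in>S. vec_add x y \<in> S" and wo: "Well_order (lex_rel S)"
    and yS: "\<forall>k. y k \<in> S" and ylen: "\<forall>k. length (y k) = n" and i: "i < n"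
    and prefix: "\<forall>k. take i (y k) = c"
    and inc: "\<forall>k. y k ! i < y (Suc k) ! i" and bound: "\<forall>k. y k ! i \<le> B" and m: "m \<ge> 1"
  shows "(omega_pow m, lex_rel S) \<in> ordLeq"
proof -
  define a where "a k = y k ! i" for k
  define L where "L = (SUP k. a k)"
  have bdd: "bdd_above (range a)" using bound unfolding a_def by (auto intro: bdd_aboveI)
  have lim: "a \<longlonglongrightarrow> L"
    unfolding L_def using inc by (intro LIMSEQ_incseq_SUP bdd incseq_SucI) (auto simp: a_def less_imp_le)
  define \<delta> where "\<delta> k = L - a k" for k
  have pos: "\<forall>k. \<delta> k > 0"
  proof
    fix k
    have "a (Suc k) \<le> L" unfolding L_def by (rule cSUP_upper[OF UNIV_I bdd])
    then show "\<delta> k > 0" using inc unfolding \<delta>_def a_def by (meson diff_gt_0_iff_gt less_le_trans)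
  qed
  have small: "\<forall>e>0. \<exists>k. \<delta> k < e"
  proof (intro allI impI)
    fix e :: real assume "e > 0"
    have "eventually (\<lambda>k. L - e < a k) sequentially"
      by (rule order_tendstoD(1)[OF lim]) (use \<open>e > 0\<close> in linarith)
    then obtain k where "L - e < a k" by (auto simp: eventually_sequentially)
    then have "\<delta> k < e" unfolding \<delta>_def by linarith
    then show "\<exists>k. \<delta> k < e" ..
  qed
  obtain \<sigma> :: "nat \<Rightarrow> nat" where fast: "\<forall>k k'. k < k' \<longrightarrow> \<delta> (\<sigma> k') \<le> \<delta> (\<sigma> k) / (2 * real m)"
    using fast_decreasing_subseq[OF pos small, of "2 * real m"] m by auto
  show ?thesis
  proof (rule omega_pow_ordLeq_of_fast_family[OF semigroup wo _ _ i, of "y \<circ> \<sigma>" c L "\<delta> \<circ> \<sigma>"])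
  qed (use yS ylen prefix pos fast m in \<open>auto simp: \<delta>_def a_def\<close>)
qed


section \<open>Finiteness of the below sets and the main theorem\<close>

definition below_set :: "real list set \<Rightarrow> real list \<Rightarrow> nat \<Rightarrow> real set" where
  "below_set S x i = {v. \<exists>y\<in>S. take i y = take i x \<and> y ! i = v \<and> v < x ! i}"

lemma infinite_strictly_monotone_seq:
  fixes A :: "'a::linorder set"
  assumes "infinite A"
  obtains t :: "nat \<Rightarrow> 'a" where "range t \<subseteq> A"
    and "(\<forall>k. t k < t (Suc k)) \<or> (\<forall>k. t (Suc k) < t k)"
proof -
  obtain s :: "nat \<Rightarrow> 'a" where s_inj: "inj s" and s_in: "range s \<subseteq> A"
    using infinite_countable_subset[OF assms] by blast
  obtain \<sigma> :: "nat \<Rightarrow> nat" where "strict_mono \<sigma>" and mono: "monoseq (s \<circ> \<sigma>)"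
    using seq_monosub[of s] by (auto simp: comp_def)
  then have "inj (s \<circ> \<sigma>)" using s_inj strict_mono_imp_inj_on inj_compose by blast
  then have step_ne: "(s \<circ> \<sigma>) k \<noteq> (s \<circ> \<sigma>) (Suc k)" for k unfolding inj_def by (metis n_not_Suc_n)
  have "(\<forall>k. (s \<circ> \<sigma>) k < (s \<circ> \<sigma>) (Suc k)) \<or> (\<forall>k. (s \<circ> \<sigma>) (Suc k) < (s \<circ> \<sigma>) k)"
    using mono step_ne unfolding monoseq_Suc by (metis le_neq_trans)
  moreover have "range (s \<circ> \<sigma>) \<subseteq> A" using s_in by auto
  ultimately show ?thesis using that by blast
qed

text \<open>If S has type at most \<open>\<omega>^h\<close>, every below set is finite: otherwise it contains a
  strictly monotone sequence of values, realised by elements \<open>y\<^sub>k\<close> of S agreeing with x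
  on the first i coordinates; decreasing contradicts well-foundedness, increasing
  (bounded by \<open>x ! i\<close>) embeds \<open>\<omega>^(h+1)\<close> into S.\<close>
lemma below_set_finite:
  assumes dim: "\<forall>x\<in>S. length x = n"
    and semigroup: "\<forall>x\<in>S. \<forall>y\<in>S. vec_add x y \<in> S"
    and wo: "Well_order (lex_rel S)"
    and type_bound: "(lex_rel S, omega_pow h) \<in> ordLeq"
    and i: "i < n"
  shows "finite (below_set S x i)"
proof (rule ccontr)
  assume "infinite (below_set S x i)"
  then obtain t where t_in: "range t \<subseteq> below_set S x i"
    and t_mono: "(\<forall>k. t k < t (Suc k)) \<or> (\<forall>k. t (Suc k) < t k)"
    by (rule infinite_strictly_monotone_seq)
  have "\<forall>k. \<exists>yk\<in>S. take i yk = take i x \<and> yk ! i = t k \<and> t k < x ! i"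
    using t_in unfolding below_set_def by auto
  then obtain y where y: "\<And>k. y k \<in> S \<and> take i (y k) = take i x \<and> y k ! i = t k \<and> t k < x ! i"
    by metis
  have ylen: "\<forall>k. length (y k) = n" using y dim by blast
  from t_mono show False
  proof
    assume "\<forall>k. t k < t (Suc k)"
    then have "(omega_pow (Suc h), lex_rel S) \<in> ordLeq"
      using y ylen i by (intro omega_pow_ordLeq_of_increasing[OF semigroup wo, of y n i "take i x" "x ! i"])
        (auto intro: less_imp_le)
    then have "(omega_pow (Suc h), omega_pow h) \<in> ordLeq" using type_bound by (rule ordLeq_transitive)
    then show False using omega_pow_Suc_not_ordLeq by blast
  next
    assume dec: "\<forall>k. t (Suc k) < t k"
    have "lex_less (y (Suc k)) (y k)" for k
      unfolding lex_less_def using y ylen i dec by (intro lexord_take_nthI[of i]) auto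
    then have "(y (Suc k), y k) \<in> lex_rel S - Id" for k unfolding lex_rel_strict using y by blast
    moreover have "wf (lex_rel S - Id)" using wo unfolding well_order_on_def by blast
    ultimately show False unfolding wf_iff_no_infinite_down_chain by blast
  qed
qed

text \<open>Counting the below sets coordinatewise is strictly monotone into \<open>\<omega>^n\<close>: at the
  first coordinate j where \<open>x < y\<close> differ, the below sets before j coincide and the
  one at j strictly grows (it gains \<open>x ! j\<close>).\<close>
lemma below_set_counts_strict_hom:
  assumes dim: "\<forall>x\<in>S. length x = n"
    and fin: "\<And>x j. x \<in> S \<Longrightarrow> j < n \<Longrightarrow> finite (below_set S x j)"
  shows "strict_hom (lex_rel S) (omega_pow n) (\<lambda>x. map (\<lambda>j. card (below_set S x j)) [0..<n])"
  unfolding strict_hom_def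
proof (intro allI impI)
  fix x y assume "(x, y) \<in> lex_rel S - Id"
  then have xS: "x \<in> S" and yS: "y \<in> S" and "lex_less x y" unfolding lex_rel_strict by blast+
  then obtain j where j: "j < n" "take j x = take j y" "x ! j < y ! j"
    using lexord_take_nthD[of x y] dim unfolding lex_less_def by auto
  have same: "below_set S x l = below_set S y l" if "l < j" for l
  proof -
    have "take l x = take l y" using j(2) that by (metis min.strict_order_iff take_take)
    moreover have "x ! l = y ! l" using j(2) that by (metis nth_take)
    ultimately show ?thesis unfolding below_set_def by simp
  qed
  have grows: "below_set S x j \<subset> below_set S y j"
  proof
    show "below_set S x j \<subseteq> below_set S y j" unfolding below_set_def using j by auto
    have "x ! j \<in> below_set S y j" "x ! j \<notin> below_set S x j"
      unfolding below_set_def using xS j by auto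
    then show "below_set S x j \<noteq> below_set S y j" by blast
  qed
  let ?cnt = "\<lambda>x. map (\<lambda>j. card (below_set S x j)) [0..<n]"
  have "(?cnt x, ?cnt y) \<in> lexord {(a, b). a < b}"
  proof (rule lexord_take_nthI[of j])
    show "take j (?cnt x) = take j (?cnt y)" using j(1) same by (simp add: take_map)
    show "(?cnt x ! j, ?cnt y ! j) \<in> {(a, b). a < b}"
      using psubset_card_mono[OF fin[OF yS j(1)] grows] j(1) by simp
  qed (use j(1) in simp_all)
  then show "(?cnt x, ?cnt y) \<in> omega_pow n - Id" unfolding omega_pow_strict by simp
qed

text \<open>The main theorem.\<close>
theorem mainTheorem6:
  fixes n h :: nat and S :: "real list set"
  assumes dim: "\<forall>x\<in>S. length x = n"
    and nonneg: "\<forall>x\<in>S. lex_le (replicate n 0) x"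
    and semigroup: "\<forall>x\<in>S. \<forall>y\<in>S. vec_add x y \<in> S"
    and wo: "Well_order (lex_rel S)"
    and type_bound: "(lex_rel S, omega_pow h) \<in> ordLeq"
  shows "(lex_rel S, omega_pow n) \<in> ordLeq"
proof (rule strict_hom_ordLeq[OF wo omega_pow_wo])
  let ?cnt = "\<lambda>x. map (\<lambda>j. card (below_set S x j)) [0..<n]"
  show "\<forall>x\<in>Field (lex_rel S). ?cnt x \<in> Field (omega_pow n)"
    unfolding Field_omega_pow by simp
  show "strict_hom (lex_rel S) (omega_pow n) ?cnt"
    using below_set_counts_strict_hom[OF dim below_set_finite[OF dim semigroup wo type_bound]] .
qed

end
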